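(* Let $s\ge r\ge2$, let $Q$ be an $s$-vertex $r$-graph and let $\mathcal P$ be a hereditary and multiplicative property of $r$-graphs. Then $\lambda^{(p)}(Q,\mathcal P)=\pi(Q,\mathcal P)$ for every $p\ge1$; in particular $\mathcal P$ is $Q$-flat.
   Context: An $r$-graph ($r\ge 2$) is a finite hypergraph all of whose edges have exactly $r$ vertices. For $I\subseteq V(H)$, $H[I]$ denotes the induced subhypergraph on $I$. For an $s$-vertex $r$-graph $Q$ and an $r$-graph $H$, $\mathcal N(Q,H)$ is the number of (not necessarily induced) subgraphs of $H$ isomorphic to $Q$. For an $n$-vertex $r$-graph $H$ with vertex set $[n]$ and $\mathbf x\in\mathbb R^n$, $P_{Q,H}(\mathbf x)=s!\sum_{\{i_1,\dots,i_s\}\in\binom{[n]}{s}}\mathcal N(Q,H[\{i_1,\dots,i_s\}])\,x_{i_1}\cdots x_{i_s}$, and for $p\ge1$, $\lambda^{(p)}(Q,H)=\max_{\|\mathbf x\|_p=1}P_{Q,H}(\mathbf x)$. A hereditary property $\mathcal P$ of $r$-graphs is a family of $r$-graphs closed under isomorphism and under taking induced subgraphs; as a standing assumption, whenever $H\in\mathcal P$, the disjoint union of $H$ with an isolated vertex is also in $\mathcal P$. $\mathcal P_n$ is the set of members of $\mathcal P$ with $n$ vertices. $ex(Q,\mathcal P_n)=\max\{\mathcal N(Q,H):H\in\mathcal P_n\}$ and $\pi(Q,\mathcal P)=\lim_{n\to\infty}ex(Q,\mathcal P_n)/\binom ns$ (this limit exists). $\lambda^{(p)}(Q,\mathcal P_n)=\max\{\lambda^{(p)}(Q,H):H\in\mathcal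 P_n\}$ and $\lambda^{(p)}(Q,\mathcal P)=\lim_{n\to\infty}\lambda^{(p)}(Q,\mathcal P_n)n^{s/p-s}$ (this limit exists). For an $r$-graph $H$ on vertex set $[n]$ and positive integers $k_1,\dots,k_n$, the blow-up $H(k_1,\dots,k_n)$ is obtained by replacing each vertex $i$ by a class $V_i$ of $k_i$ vertices (classes pairwise disjoint), whose edges are all $r$-sets $\{u_1,\dots,u_r\}$ with $u_j\in V_{i_j}$ for some edge $\{i_1,\dots,i_r\}\in E(H)$. $\mathcal P$ is multiplicative if every blow-up of every member of $\mathcal P$ is in $\mathcal P$. $\mathcal P$ is $Q$-flat if $\lambda^{(1)}(Q,\mathcal P)=\pi(Q,\mathcal P)$. *)

theory Defs
  imports Complex_Main
begin

type_synonym hg = "nat set \<times> nat set set"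

definition verts :: "hg \<Rightarrow> nat set" where "verts H = fst H"
definition edges :: "hg \<Rightarrow> nat set set" where "edges H = snd H"

definition is_rgraph :: "nat \<Rightarrow> hg \<Rightarrow> bool" where
  "is_rgraph r H \<longleftrightarrow> finite (verts H) \<and> (\<forall>e\<in>edges H. e \<subseteq> verts H \<and> card e = r)"

definition induced :: "hg \<Rightarrow> nat set \<Rightarrow> hg" where
  "induced H I = (I, {e \<in> edges H. e \<subseteq> I})"

definition hg_iso :: "hg \<Rightarrow> hg \<Rightarrow> (nat \<Rightarrow> nat) \<Rightarrow> bool" where
  "hg_iso G H f \<longleftrightarrow> bij_betw f (verts G) (verts H) \<and> (image f) ` edges G = edges H"

definition isomorphic :: "hg \<Rightarrow> hg \<Rightarrow> bool" where
  "isomorphic G H \<longleftrightarrow> (\<exists>f. hg_iso G H f)"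

definition subgraph :: "hg \<Rightarrow> hg \<Rightarrow> bool" where
  "subgraph F H \<longleftrightarrow> verts F \<subseteq> verts H \<and> edges F \<subseteq> edges H \<and> (\<forall>e\<in>edges F. e \<subseteq> verts F)"

definition num_copies :: "hg \<Rightarrow> hg \<Rightarrow> nat" where
  "num_copies Q H = card {F. subgraph F H \<and> isomorphic Q F}"

definition poly_QH :: "hg \<Rightarrow> hg \<Rightarrow> (nat \<Rightarrow> real) \<Rightarrow> real" where
  "poly_QH Q H x = fact (card (verts Q)) *
     (\<Sum>I\<in>{I. I \<subseteq> verts H \<and> card I = card (verts Q)}.
        real (num_copies Q (induced H I)) * (\<Prod>i\<in>I. x i))"

definition pnorm :: "real \<Rightarrow> nat set \<Rightarrow> (nat \<Rightarrow> real) \<Rightarrow> real" where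
  "pnorm p V x = (\<Sum>i\<in>V. \<bar>x i\<bar> powr p) powr (1 / p)"

definition lagr :: "real \<Rightarrow> hg \<Rightarrow> hg \<Rightarrow> real" where
  "lagr p Q H = Sup {poly_QH Q H x | x. pnorm p (verts H) x = 1}"

definition hereditary :: "nat \<Rightarrow> hg set \<Rightarrow> bool" where
  "hereditary r P \<longleftrightarrow>
     (\<forall>H\<in>P. is_rgraph r H)
   \<and> (\<forall>G H. H \<in> P \<longrightarrow> isomorphic H G \<longrightarrow> G \<in> P)
   \<and> (\<forall>H\<in>P. \<forall>I. I \<subseteq> verts H \<longrightarrow> induced H I \<in> P)"

text \<open>standing assumption: adding an isolated vertex stays in the property\<close>
definition isolated_closed :: "hg set \<Rightarrow> bool" where
  "isolated_closed P \<longleftrightarrow> (\<forall>H\<in>P. \<forall>v. v \<notin> verts H \<longrightarrow> (insert v (verts H), edges H) \<in> P)"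

text \<open>G is a blow-up of H: vertex classes are the (nonempty) fibres of phi\<close>
definition is_blowup :: "hg \<Rightarrow> hg \<Rightarrow> bool" where
  "is_blowup G H \<longleftrightarrow> finite (verts G) \<and>
     (\<exists>\<phi>. \<phi> ` verts G = verts H \<and>
        (\<forall>e. e \<in> edges G \<longleftrightarrow> e \<subseteq> verts G \<and> inj_on \<phi> e \<and> \<phi> ` e \<in> edges H))"

definition multiplicative :: "hg set \<Rightarrow> bool" where
  "multiplicative P \<longleftrightarrow> (\<forall>H\<in>P. \<forall>G. is_blowup G H \<longrightarrow> G \<in> P)"

definition members_n :: "hg set \<Rightarrow> nat \<Rightarrow> hg set" where
  "members_n P n = {H \<in> P. card (verts H) = n}"

definition ex_num :: "hg \<Rightarrow> hg set \<Rightarrow> nat \<Rightarrow> nat" where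
  "ex_num Q P n = Max (num_copies Q ` members_n P n)"

definition lagr_n :: "real \<Rightarrow> hg \<Rightarrow> hg set \<Rightarrow> nat \<Rightarrow> real" where
  "lagr_n p Q P n = Sup (lagr p Q ` members_n P n)"

definition pi_seq :: "hg \<Rightarrow> hg set \<Rightarrow> nat \<Rightarrow> real" where
  "pi_seq Q P n = real (ex_num Q P n) / real (n choose card (verts Q))"

definition lagr_seq :: "real \<Rightarrow> hg \<Rightarrow> hg set \<Rightarrow> nat \<Rightarrow> real" where
  "lagr_seq p Q P n = lagr_n p Q P n * real n powr (real (card (verts Q)) / p - real (card (verts Q)))"

definition pi_prop :: "hg \<Rightarrow> hg set \<Rightarrow> real" where
  "pi_prop Q P = lim (pi_seq Q P)"

definition lagr_prop :: "real \<Rightarrow> hg \<Rightarrow> hg set \<Rightarrow> real" where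
  "lagr_prop p Q P = lim (lagr_seq p Q P)"

end

theory Submission
  imports Defs "HOL-Analysis.Analysis" "HOL-Library.Nat_Bijection"
begin

text \<open>
  Write \<open>s = |V(Q)|\<close> and \<open>b(n) = s! ex(Q, \<P>\<^sub>n) / n^s\<close>. For a positive integer
  vector \<open>k\<close>, \<open>P\<^sub>Q\<^sub>H(k)\<close> is at most \<open>s!\<close> times the number of copies of \<open>Q\<close> in the
  blow-up \<open>H(k)\<close>, which again lies in \<open>\<P>\<close>; so \<open>P\<^sub>Q\<^sub>H(k) \<le> s! ex(Q, \<P>\<^sub>m)\<close> with
  \<open>m = \<Sigma> k\<close>. Blowing up every vertex of an extremal graph \<open>q = \<lfloor>m/n\<rfloor>\<close> times gives
  \<open>b(m) \<ge> b(n) (1 - n/m)^s\<close>, so \<open>b(n)\<close> converges to \<open>L = sup b\<close>, and so does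
  \<open>ex(Q, \<P>\<^sub>n) / binom(n, s) = b(n) n^s / (s! binom(n, s))\<close>.

  For the Lagrangian, the uniform unit vector gives \<open>\<lambda>\<^sup>(\<^sup>p\<^sup>)(Q, \<P>\<^sub>n) n^(s/p - s) \<ge> b(n)\<close>.
  Conversely, rounding \<open>j y\<close> up to integers and letting \<open>j \<rightarrow> \<infinity>\<close> gives
  \<open>P\<^sub>Q\<^sub>H(y) \<le> L (\<Sigma> y)^s\<close> for \<open>y \<ge> 0\<close>, and the power mean inequality
  \<open>\<Sigma> |x\<^sub>i| \<le> n^(1 - 1/p)\<close> on the unit \<open>p\<close>-sphere turns this into
  \<open>\<lambda>\<^sup>(\<^sup>p\<^sup>)(Q, \<P>\<^sub>n) n^(s/p - s) \<le> L\<close>.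
\<close>

section \<open>Copies of a hypergraph\<close>

definition copies :: "hg \<Rightarrow> hg \<Rightarrow> hg set" where
  "copies Q H = {F. subgraph F H \<and> isomorphic Q F}"

abbreviation k_subsets :: "nat set \<Rightarrow> nat \<Rightarrow> nat set set" where
  "k_subsets V k \<equiv> {I. I \<subseteq> V \<and> card I = k}"

lemma num_copies_eq_card: "num_copies Q H = card (copies Q H)"
  by (simp add: num_copies_def copies_def)

lemma verts_pair [simp]: "verts (V, E) = V"
  and edges_pair [simp]: "edges (V, E) = E"
  by (simp_all add: verts_def edges_def)

lemma verts_induced [simp]: "verts (induced H I) = I"
  and edges_induced [simp]: "edges (induced H I) = {e \<in> edges H. e \<subseteq> I}"
  by (simp_all add: induced_def)

lemma copies_subset_Pow: "copies Q H \<subseteq> Pow (verts H) \<times> Pow (Pow (verts H))"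
  by (force simp: copies_def subgraph_def verts_def edges_def)

lemma finite_copies: "finite (verts H) \<Longrightarrow> finite (copies Q H)"
  by (rule finite_subset[OF copies_subset_Pow]) simp

lemma card_copies_le:
  assumes "finite (verts H)"
  shows "card (copies Q H) \<le> 2 ^ card (verts H) * 2 ^ 2 ^ card (verts H)"
proof -
  have "card (copies Q H) \<le> card (Pow (verts H) \<times> Pow (Pow (verts H)))"
    using assms by (intro card_mono[OF _ copies_subset_Pow]) simp
  also have "\<dots> = 2 ^ card (verts H) * 2 ^ 2 ^ card (verts H)"
    using assms by (simp add: card_cartesian_product card_Pow)
  finally show ?thesis .
qed

lemma card_verts_isomorphic: "isomorphic Q F \<Longrightarrow> card (verts F) = card (verts Q)"
  by (auto simp: isomorphic_def hg_iso_def bij_betw_same_card)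

lemma verts_copy_induced:
  assumes "F \<in> copies Q (induced H I)" "finite I" "card I = card (verts Q)"
  shows "verts F = I"
proof (rule card_subset_eq[OF \<open>finite I\<close>])
  show "verts F \<subseteq> I"
    using assms(1) by (auto simp: copies_def subgraph_def)
  show "card (verts F) = card I"
    using assms(1,3) card_verts_isomorphic by (auto simp: copies_def)
qed

text \<open>Each copy of \<open>Q\<close> lives in the induced subgraph on its own vertex set.\<close>

lemma card_copies_le_sum_induced:
  assumes fin: "finite (verts H)"
  shows "card (copies Q H)
    \<le> (\<Sum>I\<in>k_subsets (verts H) (card (verts Q)). card (copies Q (induced H I)))"
proof -
  let ?S = "k_subsets (verts H) (card (verts Q))"
  have fin_S: "finite ?S"
    using fin by simp
  have fin_copies: "finite (copies Q (induced H I))" if "I \<in> ?S" for I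
    using that fin by (intro finite_copies) (auto intro: finite_subset)
  have "card (copies Q H) \<le> card (Sigma ?S (\<lambda>I. copies Q (induced H I)))"
  proof (rule card_inj_on_le[where f = "\<lambda>F. (verts F, F)"])
    show "inj_on (\<lambda>F. (verts F, F)) (copies Q H)"
      by (auto simp: inj_on_def)
    show "(\<lambda>F. (verts F, F)) ` copies Q H \<subseteq> Sigma ?S (\<lambda>I. copies Q (induced H I))"
      by (auto simp: copies_def subgraph_def dest: card_verts_isomorphic)
    show "finite (Sigma ?S (\<lambda>I. copies Q (induced H I)))"
      by (rule finite_SigmaI[OF fin_S fin_copies])
  qed
  also have "\<dots> = (\<Sum>I\<in>?S. card (copies Q (induced H I)))"
    using fin_S fin_copies by (intro card_SigmaI) auto
  finally show ?thesis .
qed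

section \<open>Blow-ups\<close>

text \<open>
  The \<open>a\<close>-th vertex of the class of \<open>i\<close> in a blow-up is the natural number encoding the
  pair \<open>(i, a)\<close>.
\<close>

definition blowup_class :: "nat \<Rightarrow> nat" where
  "blowup_class v = fst (prod_decode v)"

definition blowup_verts :: "hg \<Rightarrow> (nat \<Rightarrow> nat) \<Rightarrow> nat set" where
  "blowup_verts H k = prod_encode ` Sigma (verts H) (\<lambda>i. {..<k i})"

definition blowup :: "hg \<Rightarrow> (nat \<Rightarrow> nat) \<Rightarrow> hg" where
  "blowup H k = (blowup_verts H k,
     {e. e \<subseteq> blowup_verts H k \<and> inj_on blowup_class e \<and> blowup_class ` e \<in> edges H})"

lemma blowup_class_prod_encode [simp]: "blowup_class (prod_encode (i, a)) = i"
  by (simp add: blowup_class_def)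

lemma card_verts_blowup:
  assumes "finite (verts H)"
  shows "card (verts (blowup H k)) = (\<Sum>i\<in>verts H. k i)"
proof -
  have "card (verts (blowup H k)) = card (Sigma (verts H) (\<lambda>i. {..<k i}))"
    unfolding blowup_def blowup_verts_def
    by (simp add: card_image[OF inj_on_subset[OF inj_prod_encode subset_UNIV]])
  also have "\<dots> = (\<Sum>i\<in>verts H. k i)"
    using assms by (simp add: card_SigmaI)
  finally show ?thesis .
qed

lemma is_blowup_blowup:
  assumes "finite (verts H)" and "\<forall>i\<in>verts H. 1 \<le> k i"
  shows "is_blowup (blowup H k) H"
  unfolding is_blowup_def
proof (intro conjI exI[of _ blowup_class])
  show "finite (verts (blowup H k))"
    using assms(1) by (simp add: blowup_def blowup_verts_def)
  have "prod_encode (i, 0) \<in> blowup_verts H k" if "i \<in> verts H" for i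
    using that assms(2) by (force simp: blowup_verts_def)
  then show "blowup_class ` verts (blowup H k) = verts H"
    by (force simp: blowup_def blowup_verts_def)
qed (simp add: blowup_def)

text \<open>A copy \<open>F\<close> of \<open>Q\<close> together with a choice \<open>\<sigma>\<close> of one vertex in each class over it.\<close>

definition lift_copy :: "(nat \<Rightarrow> nat) \<Rightarrow> hg \<Rightarrow> hg" where
  "lift_copy \<sigma> F = ((\<lambda>i. prod_encode (i, \<sigma> i)) ` verts F,
     image (\<lambda>i. prod_encode (i, \<sigma> i)) ` edges F)"

lemma inj_on_prod_encode_graph: "inj_on (\<lambda>i. prod_encode (i, \<sigma> i)) A"
  by (auto simp: inj_on_def)

lemma hg_iso_lift_copy:
  assumes "hg_iso Q F h"
  shows "hg_iso Q (lift_copy \<sigma> F) ((\<lambda>i. prod_encode (i, \<sigma> i)) \<circ> h)"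
  unfolding hg_iso_def
proof
  let ?\<psi> = "\<lambda>i. prod_encode (i, \<sigma> i)"
  have "bij_betw ?\<psi> (verts F) (verts (lift_copy \<sigma> F))"
    by (simp add: lift_copy_def inj_on_imp_bij_betw[OF inj_on_prod_encode_graph])
  then show "bij_betw (?\<psi> \<circ> h) (verts Q) (verts (lift_copy \<sigma> F))"
    using assms bij_betw_trans by (auto simp: hg_iso_def)
  have "image (?\<psi> \<circ> h) ` edges Q = image ?\<psi> ` (image h ` edges Q)"
    by (simp add: image_comp image_image)
  then show "image (?\<psi> \<circ> h) ` edges Q = edges (lift_copy \<sigma> F)"
    using assms by (simp add: hg_iso_def lift_copy_def)
qed

lemma lift_copy_in_copies_blowup:
  assumes F: "F \<in> copies Q (induced H I)" and I: "I \<subseteq> verts H" "finite I" "card I = card (verts Q)"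
    and \<sigma>: "\<sigma> \<in> PiE I (\<lambda>i. {..<k i})"
  shows "lift_copy \<sigma> F \<in> copies Q (blowup H k)"
proof -
  let ?\<psi> = "\<lambda>i. prod_encode (i, \<sigma> i)"
  have verts_F: "verts F = I"
    using verts_copy_induced[OF F I(2,3)] .
  have edges_F: "f \<in> edges H \<and> f \<subseteq> I" if "f \<in> edges F" for f
    using F that by (auto simp: copies_def subgraph_def)
  have \<psi>_I: "?\<psi> ` I \<subseteq> blowup_verts H k"
    using I(1) \<sigma> by (auto simp: blowup_verts_def PiE_def Pi_def)
  have lifted_edge: "?\<psi> ` f \<in> edges (blowup H k)" if "f \<in> edges F" for f
  proof -
    have "?\<psi> ` f \<subseteq> blowup_verts H k"
      using edges_F[OF that] \<psi>_I by blast
    moreover have "inj_on blowup_class (?\<psi> ` f)"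
      by (auto simp: inj_on_def)
    moreover have "blowup_class ` ?\<psi> ` f \<in> edges H"
      using edges_F[OF that] by (simp add: image_image)
    ultimately show ?thesis
      by (simp add: blowup_def)
  qed
  have lifted_edge_subset: "?\<psi> ` f \<subseteq> ?\<psi> ` verts F" if "f \<in> edges F" for f
    using edges_F[OF that] verts_F by (intro image_mono) simp
  have "subgraph (lift_copy \<sigma> F) (blowup H k)"
    unfolding subgraph_def
  proof (intro conjI)
    show "verts (lift_copy \<sigma> F) \<subseteq> verts (blowup H k)"
      using \<psi>_I verts_F by (simp add: lift_copy_def blowup_def)
    show "edges (lift_copy \<sigma> F) \<subseteq> edges (blowup H k)"
      using lifted_edge by (auto simp: lift_copy_def)
    show "\<forall>e\<in>edges (lift_copy \<sigma> F). e \<subseteq> verts (lift_copy \<sigma> F)"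
      using lifted_edge_subset by (simp add: lift_copy_def)
  qed
  moreover obtain h where "hg_iso Q F h"
    using F by (auto simp: copies_def isomorphic_def)
  then have "hg_iso Q (lift_copy \<sigma> F) (?\<psi> \<circ> h)"
    by (rule hg_iso_lift_copy)
  ultimately show ?thesis
    by (auto simp: copies_def isomorphic_def)
qed

lemma lift_copy_inj:
  assumes "\<forall>e\<in>edges F\<^sub>1. e \<subseteq> verts F\<^sub>1" "\<forall>e\<in>edges F\<^sub>2. e \<subseteq> verts F\<^sub>2"
    and "\<sigma>\<^sub>1 \<in> extensional (verts F\<^sub>1)" "\<sigma>\<^sub>2 \<in> extensional (verts F\<^sub>2)"
    and eq: "lift_copy \<sigma>\<^sub>1 F\<^sub>1 = lift_copy \<sigma>\<^sub>2 F\<^sub>2"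
  shows "F\<^sub>1 = F\<^sub>2 \<and> \<sigma>\<^sub>1 = \<sigma>\<^sub>2"
proof -
  have lifted_verts:
    "(\<lambda>i. prod_encode (i, \<sigma>\<^sub>1 i)) ` verts F\<^sub>1 = (\<lambda>i. prod_encode (i, \<sigma>\<^sub>2 i)) ` verts F\<^sub>2"
    using eq by (simp add: lift_copy_def)
  then have "blowup_class ` (\<lambda>i. prod_encode (i, \<sigma>\<^sub>1 i)) ` verts F\<^sub>1
      = blowup_class ` (\<lambda>i. prod_encode (i, \<sigma>\<^sub>2 i)) ` verts F\<^sub>2"
    by simp
  then have verts_eq: "verts F\<^sub>1 = verts F\<^sub>2"
    by (simp add: image_image)
  have \<sigma>_eq: "\<sigma>\<^sub>1 = \<sigma>\<^sub>2"
  proof (rule extensionalityI[OF assms(3)])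
    show "\<sigma>\<^sub>2 \<in> extensional (verts F\<^sub>1)"
      using assms(4) verts_eq by simp
    show "\<sigma>\<^sub>1 i = \<sigma>\<^sub>2 i" if "i \<in> verts F\<^sub>1" for i
    proof -
      have "prod_encode (i, \<sigma>\<^sub>1 i) \<in> (\<lambda>i. prod_encode (i, \<sigma>\<^sub>2 i)) ` verts F\<^sub>2"
        using that lifted_verts by blast
      then show ?thesis
        by auto
    qed
  qed
  have "image (\<lambda>i. prod_encode (i, \<sigma>\<^sub>1 i)) ` edges F\<^sub>1
      = image (\<lambda>i. prod_encode (i, \<sigma>\<^sub>1 i)) ` edges F\<^sub>2"
    using eq \<sigma>_eq by (simp add: lift_copy_def)
  then have "edges F\<^sub>1 = edges F\<^sub>2"
    using assms(1,2) verts_eq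
    by (subst (asm) inj_on_image_eq_iff[OF inj_on_image_Pow[OF inj_on_prod_encode_graph]]) auto
  with verts_eq \<sigma>_eq show ?thesis
    by (simp add: prod_eq_iff verts_def edges_def)
qed

lemma card_Sigma_copies_PiE:
  assumes "finite (verts H)"
  shows "card (SIGMA I:k_subsets (verts H) s. copies Q (induced H I) \<times> PiE I (\<lambda>i. {..<k i}))
    = (\<Sum>I\<in>k_subsets (verts H) s. card (copies Q (induced H I)) * (\<Prod>i\<in>I. k i))"
proof -
  have fin_I: "finite I" if "I \<in> k_subsets (verts H) s" for I
    using that assms by (auto intro: finite_subset)
  have "card (SIGMA I:k_subsets (verts H) s. copies Q (induced H I) \<times> PiE I (\<lambda>i. {..<k i}))
      = (\<Sum>I\<in>k_subsets (verts H) s. card (copies Q (induced H I) \<times> PiE I (\<lambda>i. {..<k i})))"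
  proof (rule card_SigmaI)
    show "finite (k_subsets (verts H) s)"
      using assms by simp
    show "\<forall>I\<in>k_subsets (verts H) s. finite (copies Q (induced H I) \<times> PiE I (\<lambda>i. {..<k i}))"
      using fin_I by (simp add: finite_copies finite_PiE)
  qed
  also have "\<dots> = (\<Sum>I\<in>k_subsets (verts H) s. card (copies Q (induced H I)) * (\<Prod>i\<in>I. k i))"
  proof (intro sum.cong refl)
    fix I assume "I \<in> k_subsets (verts H) s"
    then show "card (copies Q (induced H I) \<times> PiE I (\<lambda>i. {..<k i}))
        = card (copies Q (induced H I)) * (\<Prod>i\<in>I. k i)"
      by (simp add: card_cartesian_product card_PiE[OF fin_I])
  qed
  finally show ?thesis .
qed

lemma inj_on_lift_copy:
  assumes "finite (verts H)"
  shows "inj_on (\<lambda>(I, F, \<sigma>). lift_copy \<sigma> F)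
    (SIGMA I:k_subsets (verts H) (card (verts Q)). copies Q (induced H I) \<times> PiE I (\<lambda>i. {..<k i}))"
proof -
  let ?S = "k_subsets (verts H) (card (verts Q))"
  have copy_data: "verts F = I \<and> (\<forall>e\<in>edges F. e \<subseteq> verts F)"
    if "I \<in> ?S" "F \<in> copies Q (induced H I)" for I F
  proof -
    have "finite I"
      using that(1) assms by (auto intro: finite_subset)
    then show ?thesis
      using that verts_copy_induced[OF that(2)] by (auto simp: copies_def subgraph_def)
  qed
  show ?thesis
  proof (rule inj_onI)
    fix x y
    assume "x \<in> (SIGMA I:?S. copies Q (induced H I) \<times> PiE I (\<lambda>i. {..<k i}))"
      and "y \<in> (SIGMA I:?S. copies Q (induced H I) \<times> PiE I (\<lambda>i. {..<k i}))"
      and eq: "(\<lambda>(I, F, \<sigma>). lift_copy \<sigma> F) x = (\<lambda>(I, F, \<sigma>). lift_copy \<sigma> F) y"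
    then obtain I F \<sigma> I' F' \<sigma>' where x: "x = (I, F, \<sigma>)" and y: "y = (I', F', \<sigma>')"
      and F: "I \<in> ?S" "F \<in> copies Q (induced H I)" "\<sigma> \<in> extensional I"
      and F': "I' \<in> ?S" "F' \<in> copies Q (induced H I')" "\<sigma>' \<in> extensional I'"
      by (cases x, cases y) (auto simp: PiE_def)
    have "F = F' \<and> \<sigma> = \<sigma>'"
      using lift_copy_inj[of F F' \<sigma> \<sigma>'] copy_data[OF F(1,2)] copy_data[OF F'(1,2)] F(3) F'(3) eq x y
      by auto
    then show "x = y"
      using x y copy_data[OF F(1,2)] copy_data[OF F'(1,2)] by simp
  qed
qed

text \<open>
  Distinct pairs \<open>(F, \<sigma>)\<close> lift to distinct copies in the blow-up; for fixed \<open>F\<close> on the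
  vertex set \<open>I\<close> there are \<open>\<Prod>\<^sub>i\<^sub>\<in>\<^sub>I k\<^sub>i\<close> choices of \<open>\<sigma>\<close>.
\<close>

lemma sum_copies_induced_le_card_copies_blowup:
  assumes fin: "finite (verts H)"
  shows "(\<Sum>I\<in>k_subsets (verts H) (card (verts Q)). card (copies Q (induced H I)) * (\<Prod>i\<in>I. k i))
    \<le> card (copies Q (blowup H k))"
proof -
  let ?T = "SIGMA I:k_subsets (verts H) (card (verts Q)). copies Q (induced H I) \<times> PiE I (\<lambda>i. {..<k i})"
  have "card ?T \<le> card (copies Q (blowup H k))"
  proof (rule card_inj_on_le[OF inj_on_lift_copy[OF fin]])
    have "lift_copy \<sigma> F \<in> copies Q (blowup H k)" if "(I, F, \<sigma>) \<in> ?T" for I F \<sigma>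
    proof -
      have "finite I"
        using that fin by (auto intro: finite_subset)
      then show ?thesis
        using that lift_copy_in_copies_blowup[of F Q H I] by auto
    qed
    then show "(\<lambda>(I, F, \<sigma>). lift_copy \<sigma> F) ` ?T \<subseteq> copies Q (blowup H k)"
      by auto
    show "finite (copies Q (blowup H k))"
      using fin by (intro finite_copies) (simp add: blowup_def blowup_verts_def)
  qed
  then show ?thesis
    using card_Sigma_copies_PiE[OF fin] by simp
qed

section \<open>The polynomial \<open>P\<^sub>Q\<^sub>H\<close>\<close>

lemma poly_QH_of_nat_le_card_copies_blowup:
  assumes "finite (verts H)"
  shows "poly_QH Q H (\<lambda>i. real (k i)) \<le> fact (card (verts Q)) * real (card (copies Q (blowup H k)))"
proof -
  have "poly_QH Q H (\<lambda>i. real (k i)) = fact (card (verts Q)) *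
      real (\<Sum>I\<in>k_subsets (verts H) (card (verts Q)). card (copies Q (induced H I)) * (\<Prod>i\<in>I. k i))"
    by (simp add: poly_QH_def num_copies_eq_card)
  also have "\<dots> \<le> fact (card (verts Q)) * real (card (copies Q (blowup H k)))"
    by (intro mult_left_mono of_nat_mono sum_copies_induced_le_card_copies_blowup assms) simp
  finally show ?thesis .
qed

lemma poly_QH_const:
  "poly_QH Q H (\<lambda>i. c) = fact (card (verts Q)) * c ^ card (verts Q) *
     (\<Sum>I\<in>k_subsets (verts H) (card (verts Q)). real (num_copies Q (induced H I)))"
proof -
  have "poly_QH Q H (\<lambda>i. c) = fact (card (verts Q)) *
      (\<Sum>I\<in>k_subsets (verts H) (card (verts Q)). real (num_copies Q (induced H I)) * c ^ card (verts Q))"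
    unfolding poly_QH_def by (intro arg_cong[where f = "\<lambda>t. fact (card (verts Q)) * t"] sum.cong) auto
  then show ?thesis
    by (simp add: sum_distrib_left algebra_simps)
qed

lemma poly_QH_const_ge_card_copies:
  assumes "finite (verts H)" "0 \<le> c"
  shows "fact (card (verts Q)) * c ^ card (verts Q) * real (card (copies Q H)) \<le> poly_QH Q H (\<lambda>i. c)"
proof -
  have "real (card (copies Q H))
      \<le> (\<Sum>I\<in>k_subsets (verts H) (card (verts Q)). real (num_copies Q (induced H I)))"
    using card_copies_le_sum_induced[OF assms(1), of Q]
    by (simp add: num_copies_eq_card flip: of_nat_sum)
  then show ?thesis
    unfolding poly_QH_const using assms(2) by (intro mult_left_mono) simp_all
qed

lemma poly_QH_mono:
  assumes "\<And>i. i \<in> verts H \<Longrightarrow> 0 \<le> y i \<and> y i \<le> z i"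
  shows "poly_QH Q H y \<le> poly_QH Q H z"
  unfolding poly_QH_def
proof (rule mult_left_mono[OF sum_mono])
  fix I assume "I \<in> k_subsets (verts H) (card (verts Q))"
  then have "(\<Prod>i\<in>I. y i) \<le> (\<Prod>i\<in>I. z i)"
    using assms by (intro prod_mono) auto
  then show "real (num_copies Q (induced H I)) * (\<Prod>i\<in>I. y i)
      \<le> real (num_copies Q (induced H I)) * (\<Prod>i\<in>I. z i)"
    by (intro mult_left_mono) simp_all
qed simp

lemma poly_QH_le_abs: "poly_QH Q H x \<le> poly_QH Q H (\<lambda>i. \<bar>x i\<bar>)"
  unfolding poly_QH_def
proof (rule mult_left_mono[OF sum_mono])
  fix I
  have "(\<Prod>i\<in>I. x i) \<le> (\<Prod>i\<in>I. \<bar>x i\<bar>)"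
    by (metis abs_ge_self abs_prod)
  then show "real (num_copies Q (induced H I)) * (\<Prod>i\<in>I. x i)
      \<le> real (num_copies Q (induced H I)) * (\<Prod>i\<in>I. \<bar>x i\<bar>)"
    by (intro mult_left_mono) simp_all
qed simp

lemma poly_QH_divide:
  "poly_QH Q H (\<lambda>i. z i / c) = poly_QH Q H z / c ^ card (verts Q)"
proof -
  have "real (num_copies Q (induced H I)) * (\<Prod>i\<in>I. z i / c)
      = real (num_copies Q (induced H I)) * (\<Prod>i\<in>I. z i) / c ^ card (verts Q)"
    if "I \<in> k_subsets (verts H) (card (verts Q))" for I
    using that by (simp add: prod_dividef)
  then show ?thesis
    unfolding poly_QH_def by (simp add: sum_divide_distrib[symmetric])
qed

section \<open>Binomial coefficients and power means\<close>

lemma fact_mult_choose_le_power: "fact s * real (n choose s) \<le> real n ^ s"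
  using of_nat_mono[OF binomial_fact_pow[of n s]] by (simp add: mult.commute)

lemma power_diff_le_fact_mult_choose:
  assumes "s \<le> n"
  shows "(n - s) ^ s \<le> fact s * (n choose s)"
proof -
  have "fact (n - s) * (fact s * (n choose s)) = fact (n - s) * \<Prod>{Suc (n - s)..n}"
    using binomial_fact_lemma[OF assms] fact_eq_fact_times[of "n - s" n]
    by (simp add: algebra_simps)
  then have falling_factorial: "fact s * (n choose s) = \<Prod>{Suc (n - s)..n}"
    by simp
  have "(n - s) ^ s = (\<Prod>i\<in>{Suc (n - s)..n}. n - s)"
    using assms by simp
  also have "\<dots> \<le> \<Prod>{Suc (n - s)..n}"
    by (rule prod_mono) auto
  finally show ?thesis
    using falling_factorial by simp
qed

lemma tendsto_power_one_minus_div: "(\<lambda>m. c * (1 - a / real m) ^ k) \<longlonglongrightarrow> (c::real)"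
proof -
  have "(\<lambda>m. c * (1 - a / real m) ^ k) \<longlonglongrightarrow> c * (1 - 0) ^ k"
    by (intro tendsto_intros lim_const_over_n)
  then show ?thesis
    by simp
qed

lemma tendsto_fact_mult_choose_div_power:
  "(\<lambda>n. fact s * real (n choose s) / real n ^ s) \<longlonglongrightarrow> 1"
proof (rule tendsto_sandwich[OF _ _ tendsto_power_one_minus_div[of 1 s s] tendsto_const])
  show "\<forall>\<^sub>F n in sequentially. 1 * (1 - real s / real n) ^ s \<le> fact s * real (n choose s) / real n ^ s"
    using eventually_ge_at_top[of "s + 1"]
  proof eventually_elim
    case (elim n)
    then have "s \<le> n" "0 < real n"
      by simp_all
    then have "1 - real s / real n = real (n - s) / real n"
      by (simp add: of_nat_diff field_simps)
    then have "1 * (1 - real s / real n) ^ s = real ((n - s) ^ s) / real n ^ s"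
      by (simp add: power_divide)
    also have "\<dots> \<le> fact s * real (n choose s) / real n ^ s"
      using of_nat_mono[OF power_diff_le_fact_mult_choose[OF \<open>s \<le> n\<close>]]
      by (intro divide_right_mono) simp_all
    finally show ?case .
  qed
  show "\<forall>\<^sub>F n in sequentially. fact s * real (n choose s) / real n ^ s \<le> 1"
    using eventually_ge_at_top[of "1::nat"]
    by eventually_elim (simp add: divide_le_eq fact_mult_choose_le_power)
qed

lemma sum_le_card_powr_of_pos:
  fixes y :: "'a \<Rightarrow> real"
  assumes "finite V" "V \<noteq> {}" "\<And>i. i \<in> V \<Longrightarrow> 0 < y i" "1 \<le> p" "(\<Sum>i\<in>V. y i powr p) = 1"
  shows "(\<Sum>i\<in>V. y i) \<le> real (card V) powr (1 - 1 / p)"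
proof -
  let ?n = "real (card V)" and ?S = "\<Sum>i\<in>V. y i"
  have n_pos: "0 < ?n"
    using assms(1,2) by (simp add: card_gt_0_iff)
  have S_pos: "0 < ?S"
    using assms(1-3) by (intro sum_pos)
  have "(\<Sum>i\<in>V. (1 / ?n) *\<^sub>R y i) powr p \<le> (\<Sum>i\<in>V. (1 / ?n) * y i powr p)"
    using n_pos assms(3)
    by (intro convex_on_sum[OF assms(1,2) powr_convex[OF assms(4)]]) (auto simp: assms(1))
  then have "(?S / ?n) powr p \<le> 1 / ?n"
    using assms(5) by (simp add: sum_divide_distrib[symmetric] mult.commute flip: sum_distrib_left)
  then have "((?S / ?n) powr p) powr (1 / p) \<le> (1 / ?n) powr (1 / p)"
    using assms(4) by (intro powr_mono2) simp_all
  then have "?S / ?n \<le> (1 / ?n) powr (1 / p)"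
    using assms(4) S_pos n_pos by (simp add: powr_powr)
  then have "?S \<le> ?n * (1 / ?n) powr (1 / p)"
    using n_pos by (simp add: divide_le_eq mult.commute)
  also have "\<dots> = ?n powr (1 - 1 / p)"
    using n_pos by (simp add: powr_divide powr_diff)
  finally show ?thesis .
qed

lemma sum_le_card_powr:
  fixes y :: "'a \<Rightarrow> real"
  assumes "finite V" "\<And>i. i \<in> V \<Longrightarrow> 0 \<le> y i" "1 \<le> p" "(\<Sum>i\<in>V. y i powr p) = 1"
  shows "(\<Sum>i\<in>V. y i) \<le> real (card V) powr (1 - 1 / p)"
proof -
  let ?W = "{i \<in> V. 0 < y i}"
  have zero_outside: "y i = 0" if "i \<in> V - ?W" for i
    using that assms(2) by force
  have sum_W: "(\<Sum>i\<in>V. y i) = (\<Sum>i\<in>?W. y i)"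
    using assms(1) zero_outside by (intro sum.mono_neutral_right) auto
  have powr_sum_W: "(\<Sum>i\<in>V. y i powr p) = (\<Sum>i\<in>?W. y i powr p)"
    using assms(1) zero_outside by (intro sum.mono_neutral_right) auto
  have "?W \<noteq> {}"
    using powr_sum_W assms(4) by (metis sum.empty zero_neq_one)
  then have "(\<Sum>i\<in>?W. y i) \<le> real (card ?W) powr (1 - 1 / p)"
    using assms(1,3,4) powr_sum_W by (intro sum_le_card_powr_of_pos) auto
  also have "\<dots> \<le> real (card V) powr (1 - 1 / p)"
    using assms(1,3) by (intro powr_mono2) (auto intro: card_mono simp: field_simps)
  finally show ?thesis
    using sum_W by simp
qed

lemma sum_abs_powr_eq_1:
  assumes "pnorm p V x = 1" "1 \<le> p"
  shows "(\<Sum>i\<in>V. \<bar>x i\<bar> powr p) = 1"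
proof -
  have "(\<Sum>i\<in>V. \<bar>x i\<bar> powr p) = ((\<Sum>i\<in>V. \<bar>x i\<bar> powr p) powr (1 / p)) powr p"
    using assms(2) by (simp add: powr_powr sum_nonneg)
  then show ?thesis
    using assms(1) by (simp add: pnorm_def)
qed

lemma ceiling_plus_one_bounds:
  fixes t :: real
  assumes "0 \<le> t"
  shows "t \<le> real (nat \<lceil>t\<rceil> + 1)" "real (nat \<lceil>t\<rceil> + 1) \<le> t + 2"
  using assms le_of_int_ceiling[of t] of_int_ceiling_le_add_one[of t] by linarith+

lemma pnorm_uniform:
  assumes "finite V" "V \<noteq> {}" "0 < p"
  shows "pnorm p V (\<lambda>i. real (card V) powr (- 1 / p)) = 1"
proof -
  have n_pos: "0 < real (card V)"
    using assms(1,2) by (simp add: card_gt_0_iff)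
  have "(\<Sum>i\<in>V. \<bar>real (card V) powr (- 1 / p)\<bar> powr p) = real (card V) * real (card V) powr (- 1)"
    using assms(3) by (simp add: powr_powr)
  also have "\<dots> = 1"
    using n_pos by (simp add: powr_minus)
  finally show ?thesis
    by (simp add: pnorm_def)
qed

section \<open>Hereditary multiplicative properties\<close>

locale hereditary_multiplicative =
  fixes r :: nat and P :: "hg set"
  assumes r_pos: "0 < r" and nonempty: "P \<noteq> {}" and hereditary_P: "hereditary r P"
    and isolated_closed_P: "isolated_closed P" and multiplicative_P: "multiplicative P"
begin

lemma finite_verts: "H \<in> P \<Longrightarrow> finite (verts H)"
  using hereditary_P by (auto simp: hereditary_def is_rgraph_def)

lemma induced_in: "H \<in> P \<Longrightarrow> I \<subseteq> verts H \<Longrightarrow> induced H I \<in> P"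
  using hereditary_P by (auto simp: hereditary_def)

lemma blowup_in:
  assumes "H \<in> P" "\<forall>i\<in>verts H. 1 \<le> k i"
  shows "blowup H k \<in> P"
  using multiplicative_P is_blowup_blowup[OF finite_verts assms(2)] assms(1)
  unfolding multiplicative_def by blast

lemma empty_hg_in: "({}, {}) \<in> P"
proof -
  obtain H where H: "H \<in> P"
    using nonempty by auto
  have "{} \<notin> edges H"
    using hereditary_P H r_pos by (force simp: hereditary_def is_rgraph_def)
  then have "induced H {} = ({}, {})"
    by (auto simp: induced_def)
  then show ?thesis
    using induced_in[OF H] by (metis empty_subsetI)
qed

lemma add_isolated_vertices:
  assumes "H \<in> P"
  shows "\<exists>H'\<in>P. card (verts H') = card (verts H) + d \<and> verts H \<subseteq> verts H' \<and> edges H' = edges H"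
  using assms
proof (induction d arbitrary: H)
  case 0
  then show ?case by auto
next
  case (Suc d)
  obtain v where v: "v \<notin> verts H"
    using finite_verts[OF Suc.prems] ex_new_if_finite[OF infinite_UNIV_nat] by blast
  have "(insert v (verts H), edges H) \<in> P"
    using isolated_closed_P Suc.prems v by (auto simp: isolated_closed_def)
  from Suc.IH[OF this] obtain H' where "H' \<in> P"
    "card (verts H') = card (insert v (verts H)) + d" "insert v (verts H) \<subseteq> verts H'" "edges H' = edges H"
    by auto
  then show ?case
    using v finite_verts[OF Suc.prems] by (intro bexI[of _ H']) auto
qed

lemma exists_supergraph_card:
  assumes "H \<in> P" "card (verts H) \<le> m"
  shows "\<exists>H'\<in>P. card (verts H') = m \<and> verts H \<subseteq> verts H' \<and> edges H' = edges H"
  using add_isolated_vertices[OF assms(1), of "m - card (verts H)"] assms(2) by auto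

lemma members_n_nonempty: "members_n P n \<noteq> {}"
  using exists_supergraph_card[OF empty_hg_in, of n] by (auto simp: members_n_def)

lemma finite_num_copies_members_n: "finite (num_copies Q ` members_n P n)"
proof (rule finite_subset)
  show "num_copies Q ` members_n P n \<subseteq> {..2 ^ n * 2 ^ 2 ^ n}"
  proof (rule image_subsetI)
    fix H assume "H \<in> members_n P n"
    then have "H \<in> P" "card (verts H) = n"
      by (simp_all add: members_n_def)
    then show "num_copies Q H \<in> {..2 ^ n * 2 ^ 2 ^ n}"
      using card_copies_le[OF finite_verts, of H Q] by (simp add: num_copies_eq_card)
  qed
qed simp

lemma card_copies_le_ex_num: "H \<in> P \<Longrightarrow> card (copies Q H) \<le> ex_num Q P (card (verts H))"
  unfolding ex_num_def num_copies_eq_card[symmetric]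
  by (rule Max_ge[OF finite_num_copies_members_n]) (auto simp: members_n_def)

lemma ex_num_attained: "\<exists>H\<in>P. card (verts H) = n \<and> card (copies Q H) = ex_num Q P n"
proof -
  have "ex_num Q P n \<in> num_copies Q ` members_n P n"
    unfolding ex_num_def
    by (intro Max_in finite_num_copies_members_n) (simp add: members_n_nonempty)
  then show ?thesis
    by (auto simp: members_n_def num_copies_eq_card)
qed

lemma ex_num_mono:
  assumes "n \<le> m"
  shows "ex_num Q P n \<le> ex_num Q P m"
proof -
  obtain H where H: "H \<in> P" "card (verts H) = n" "card (copies Q H) = ex_num Q P n"
    using ex_num_attained by blast
  obtain H' where H': "H' \<in> P" "card (verts H') = m" "verts H \<subseteq> verts H'" "edges H' = edges H"
    using exists_supergraph_card[OF H(1)] H(2) assms by blast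
  have "copies Q H \<subseteq> copies Q H'"
    using H' by (auto simp: copies_def subgraph_def)
  then have "card (copies Q H) \<le> card (copies Q H')"
    by (intro card_mono finite_copies finite_verts H'(1))
  also have "\<dots> \<le> ex_num Q P m"
    using card_copies_le_ex_num[OF H'(1)] H'(2) by simp
  finally show ?thesis
    using H(3) by simp
qed

section \<open>The blow-up density\<close>

lemma poly_QH_of_nat_le_ex_num:
  assumes "H \<in> P" "\<forall>i\<in>verts H. 1 \<le> k i"
  shows "poly_QH Q H (\<lambda>i. real (k i)) \<le> fact (card (verts Q)) * real (ex_num Q P (\<Sum>i\<in>verts H. k i))"
proof -
  have "card (copies Q (blowup H k)) \<le> ex_num Q P (\<Sum>i\<in>verts H. k i)"
    using card_copies_le_ex_num[OF blowup_in[OF assms]] card_verts_blowup[OF finite_verts[OF assms(1)]]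
    by simp
  then have "fact (card (verts Q)) * real (card (copies Q (blowup H k)))
      \<le> fact (card (verts Q)) * real (ex_num Q P (\<Sum>i\<in>verts H. k i))"
    by (intro mult_left_mono of_nat_mono) simp_all
  with poly_QH_of_nat_le_card_copies_blowup[OF finite_verts[OF assms(1)], of Q k] show ?thesis
    by (rule order_trans)
qed

text \<open>A blow-up of an extremal graph with every class of size \<open>q\<close>.\<close>

lemma power_mult_ex_num_le:
  assumes "1 \<le> q"
  shows "real q ^ card (verts Q) * real (ex_num Q P n) \<le> real (ex_num Q P (q * n))"
proof -
  obtain H where H: "H \<in> P" "card (verts H) = n" "card (copies Q H) = ex_num Q P n"
    using ex_num_attained by blast
  have "fact (card (verts Q)) * (real q ^ card (verts Q) * real (ex_num Q P n))
      \<le> poly_QH Q H (\<lambda>i. real q)"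
    using poly_QH_const_ge_card_copies[OF finite_verts[OF H(1)], of "real q" Q] H(3)
    by (simp add: mult.assoc)
  also have "\<dots> \<le> fact (card (verts Q)) * real (ex_num Q P (q * n))"
    using poly_QH_of_nat_le_ex_num[OF H(1), of "\<lambda>i. q" Q] assms H(2) by (simp add: mult.commute)
  finally show ?thesis
    by simp
qed

lemma ex_num_le_choose:
  "ex_num Q P n \<le> (n choose card (verts Q)) * (2 ^ card (verts Q) * 2 ^ 2 ^ card (verts Q))"
proof -
  let ?s = "card (verts Q)"
  obtain H where H: "H \<in> P" "card (verts H) = n" "card (copies Q H) = ex_num Q P n"
    using ex_num_attained by blast
  have fin: "finite (verts H)"
    using finite_verts[OF H(1)] .
  have "ex_num Q P n \<le> (\<Sum>I\<in>k_subsets (verts H) ?s. card (copies Q (induced H I)))"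
    using card_copies_le_sum_induced[OF fin, of Q] H(3) by simp
  also have "\<dots> \<le> (\<Sum>I\<in>k_subsets (verts H) ?s. 2 ^ ?s * 2 ^ 2 ^ ?s)"
  proof (rule sum_mono)
    fix I assume "I \<in> k_subsets (verts H) ?s"
    then have "finite I" "card I = ?s"
      using fin finite_subset by auto
    then show "card (copies Q (induced H I)) \<le> 2 ^ ?s * 2 ^ 2 ^ ?s"
      using card_copies_le[of "induced H I" Q] by simp
  qed
  also have "\<dots> = (n choose ?s) * (2 ^ ?s * 2 ^ 2 ^ ?s)"
    using n_subsets[OF fin] H(2) by simp
  finally show ?thesis .
qed

definition ex_density :: "hg \<Rightarrow> nat \<Rightarrow> real" where
  "ex_density Q n = fact (card (verts Q)) * real (ex_num Q P n) / real n ^ card (verts Q)"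

definition ex_density_Sup :: "hg \<Rightarrow> real" where
  "ex_density_Sup Q = (SUP n. ex_density Q n)"

lemma ex_density_nonneg: "0 \<le> ex_density Q n"
  by (simp add: ex_density_def)

lemma ex_density_le: "ex_density Q n \<le> 2 ^ card (verts Q) * 2 ^ 2 ^ card (verts Q)"
proof (cases "n = 0 \<and> 0 < card (verts Q)")
  case True
  then show ?thesis
    by (simp add: ex_density_def power_0_left)
next
  case False
  let ?s = "card (verts Q)" and ?C = "2 ^ card (verts Q) * 2 ^ 2 ^ card (verts Q) :: real"
  have pos: "0 < real n ^ ?s"
    using False by auto
  have "fact ?s * real (ex_num Q P n) \<le> fact ?s * real (n choose ?s) * ?C"
    using of_nat_mono[OF ex_num_le_choose[of Q n]] by (simp add: mult.assoc mult_left_mono)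
  also have "\<dots> \<le> real n ^ ?s * ?C"
    by (intro mult_right_mono fact_mult_choose_le_power) simp
  finally show ?thesis
    using pos by (simp add: ex_density_def divide_le_eq mult.commute)
qed

lemma bdd_above_ex_density: "bdd_above (range (ex_density Q))"
  using ex_density_le by (intro bdd_aboveI2)

lemma ex_density_le_Sup: "ex_density Q n \<le> ex_density_Sup Q"
  unfolding ex_density_Sup_def by (intro cSup_upper bdd_above_ex_density) simp

lemma ex_density_Sup_nonneg: "0 \<le> ex_density_Sup Q"
  using ex_density_nonneg ex_density_le_Sup order_trans by blast

lemma ex_density_growth:
  assumes "1 \<le> n" "n \<le> m"
  shows "ex_density Q n * (1 - real n / real m) ^ card (verts Q) \<le> ex_density Q m"
proof -
  let ?s = "card (verts Q)"
  define q where "q = m div n"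
  have q_pos: "1 \<le> q"
    using assms by (simp add: q_def div_greater_zero_iff Suc_le_eq)
  have "m \<le> q * n + n"
    using assms mod_less_divisor[of n m] div_mult_mod_eq[of m n] unfolding q_def by linarith
  then have "real m - real n \<le> real q * real n"
    by (metis of_nat_add of_nat_le_iff of_nat_mult diff_le_eq)
  moreover have m_pos: "0 < real m"
    using assms by simp
  ultimately have "1 - real n / real m \<le> real q * real n / real m"
    by (simp add: diff_divide_eq_iff divide_right_mono)
  moreover have "0 \<le> 1 - real n / real m"
    using assms by simp
  ultimately have "ex_density Q n * (1 - real n / real m) ^ ?s
      \<le> ex_density Q n * (real q * real n / real m) ^ ?s"
    by (intro mult_left_mono power_mono ex_density_nonneg)
  also have "\<dots> = fact ?s * (real q ^ ?s * real (ex_num Q P n)) / real m ^ ?s"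
    using assms by (simp add: ex_density_def power_divide power_mult_distrib)
  also have "\<dots> \<le> fact ?s * real (ex_num Q P m) / real m ^ ?s"
    using power_mult_ex_num_le[OF q_pos, of Q n] of_nat_mono[OF ex_num_mono[of "q * n" m Q]]
    by (intro divide_right_mono mult_left_mono) (simp_all add: q_def)
  finally show ?thesis
    by (simp add: ex_density_def)
qed

lemma ex_density_tendsto_Sup:
  assumes "1 \<le> card (verts Q)"
  shows "ex_density Q \<longlonglongrightarrow> ex_density_Sup Q"
proof (rule order_tendstoI)
  fix a assume "a < ex_density_Sup Q"
  then obtain n where "a < ex_density Q n"
    using less_cSup_iff[OF _ bdd_above_ex_density] by (auto simp: ex_density_Sup_def)
  moreover have "ex_density Q 0 \<le> ex_density Q 1"
    using assms by (simp add: ex_density_def power_0_left)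
  ultimately have n: "a < ex_density Q (max n 1)"
    by (cases "n = 0") (simp_all add: max_absorb1 Suc_le_eq)
  have "\<forall>\<^sub>F m in sequentially. a < ex_density Q (max n 1) * (1 - real (max n 1) / real m) ^ card (verts Q)"
    using order_tendstoD(1)[OF tendsto_power_one_minus_div n] .
  then show "\<forall>\<^sub>F m in sequentially. a < ex_density Q m"
    using eventually_ge_at_top[of "max n 1"]
  proof eventually_elim
    case (elim m)
    then show ?case
      using ex_density_growth[of "max n 1" m Q] by linarith
  qed
next
  fix a assume "ex_density_Sup Q < a"
  then show "\<forall>\<^sub>F m in sequentially. ex_density Q m < a"
    using ex_density_le_Sup[of Q] by (intro always_eventually allI) (rule le_less_trans)
qed

lemma pi_seq_tendsto:
  assumes "1 \<le> card (verts Q)"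
  shows "pi_seq Q P \<longlonglongrightarrow> ex_density_Sup Q"
proof -
  let ?s = "card (verts Q)"
  have "(\<lambda>n. ex_density Q n / (fact ?s * real (n choose ?s) / real n ^ ?s)) \<longlonglongrightarrow> ex_density_Sup Q / 1"
    using ex_density_tendsto_Sup[OF assms] tendsto_fact_mult_choose_div_power by (rule tendsto_divide) simp
  moreover have "\<forall>\<^sub>F n in sequentially.
      ex_density Q n / (fact ?s * real (n choose ?s) / real n ^ ?s) = pi_seq Q P n"
    using eventually_ge_at_top[of "?s + 1"]
  proof eventually_elim
    case (elim n)
    then have "0 < real n ^ ?s" "0 < real (n choose ?s)"
      by simp_all
    then show ?case
      by (simp add: ex_density_def pi_seq_def)
  qed
  ultimately show ?thesis
    by (simp add: tendsto_cong)
qed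

section \<open>Lagrangians\<close>

text \<open>Round \<open>j y\<close> up to a positive integer vector \<open>k\<close> and compare with the blow-up \<open>H(k)\<close>.\<close>

lemma poly_QH_le_ex_density_rounding:
  assumes H: "H \<in> P" "verts H \<noteq> {}" and y: "\<And>i. i \<in> verts H \<Longrightarrow> 0 \<le> y i" and "1 \<le> j"
  defines "k \<equiv> \<lambda>i. nat \<lceil>real j * y i\<rceil> + 1"
  shows "poly_QH Q H y \<le> ex_density Q (\<Sum>i\<in>verts H. k i) *
    ((\<Sum>i\<in>verts H. y i) + 2 * real (card (verts H)) / real j) ^ card (verts Q)"
proof -
  let ?s = "card (verts Q)" and ?S = "\<Sum>i\<in>verts H. y i"
  define m where "m = (\<Sum>i\<in>verts H. k i)"
  have fin: "finite (verts H)"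
    using finite_verts[OF H(1)] .
  have j_pos: "0 < real j"
    using \<open>1 \<le> j\<close> by simp
  have k_bounds: "real j * y i \<le> real (k i)" "real (k i) \<le> real j * y i + 2" if "i \<in> verts H" for i
    unfolding k_def using ceiling_plus_one_bounds y[OF that] j_pos by simp_all
  have m_pos: "0 < m"
    unfolding m_def k_def using fin H(2) by (intro sum_pos) simp_all
  have "real m \<le> (\<Sum>i\<in>verts H. real j * y i + 2)"
    unfolding m_def of_nat_sum using k_bounds(2) by (intro sum_mono)
  then have m_le: "real m / real j \<le> ?S + 2 * real (card (verts H)) / real j"
    using j_pos by (simp add: sum.distrib divide_le_eq algebra_simps flip: sum_distrib_left)
  have "poly_QH Q H y \<le> poly_QH Q H (\<lambda>i. real (k i) / real j)"
    using k_bounds(1) y j_pos by (intro poly_QH_mono) (simp add: le_divide_eq mult.commute)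
  also have "\<dots> = poly_QH Q H (\<lambda>i. real (k i)) / real j ^ ?s"
    by (rule poly_QH_divide)
  also have "\<dots> \<le> fact ?s * real (ex_num Q P m) / real j ^ ?s"
    unfolding m_def using poly_QH_of_nat_le_ex_num[OF H(1), of k Q]
    by (intro divide_right_mono) (simp_all add: k_def)
  also have "\<dots> = ex_density Q m * (real m / real j) ^ ?s"
    using m_pos by (simp add: ex_density_def power_divide)
  also have "\<dots> \<le> ex_density Q m * (?S + 2 * real (card (verts H)) / real j) ^ ?s"
    using m_le by (intro mult_left_mono power_mono ex_density_nonneg) simp_all
  finally show ?thesis
    unfolding m_def .
qed

lemma poly_QH_le_ex_density_Sup:
  assumes "1 \<le> card (verts Q)" and H: "H \<in> P"
    and y: "\<And>i. i \<in> verts H \<Longrightarrow> 0 \<le> y i" and S_pos: "0 < (\<Sum>i\<in>verts H. y i)"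
  shows "poly_QH Q H y \<le> ex_density_Sup Q * (\<Sum>i\<in>verts H. y i) ^ card (verts Q)"
proof -
  let ?s = "card (verts Q)" and ?S = "\<Sum>i\<in>verts H. y i" and ?n = "card (verts H)"
  define m where "m j = (\<Sum>i\<in>verts H. nat \<lceil>real j * y i\<rceil> + 1)" for j
  have "verts H \<noteq> {}"
    using S_pos by auto
  have "real j * ?S \<le> real (m j)" for j
    unfolding m_def of_nat_sum sum_distrib_left using ceiling_plus_one_bounds(1) y
    by (intro sum_mono) simp
  then have "filterlim m at_top sequentially"
    unfolding filterlim_at_top
  proof (intro allI)
    fix z :: nat
    show "\<forall>\<^sub>F j in sequentially. z \<le> m j"
      using eventually_ge_at_top[of "nat \<lceil>real z / ?S\<rceil>"]
    proof eventually_elim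
      case (elim j)
      then have "real z \<le> real j * ?S"
        using S_pos by (simp add: divide_le_eq)
      then show ?case
        using \<open>real j * ?S \<le> real (m j)\<close> by linarith
    qed
  qed
  then have "(\<lambda>j. ex_density Q (m j)) \<longlonglongrightarrow> ex_density_Sup Q"
    using ex_density_tendsto_Sup[OF assms(1)] by (rule filterlim_compose[rotated])
  moreover have "(\<lambda>j. (?S + 2 * real ?n / real j) ^ ?s) \<longlonglongrightarrow> (?S + 0) ^ ?s"
    by (intro tendsto_intros lim_const_over_n)
  ultimately have "(\<lambda>j. ex_density Q (m j) * (?S + 2 * real ?n / real j) ^ ?s)
      \<longlonglongrightarrow> ex_density_Sup Q * ?S ^ ?s"
    using tendsto_mult by fastforce
  moreover have "poly_QH Q H y \<le> ex_density Q (m j) * (?S + 2 * real ?n / real j) ^ ?s" if "1 \<le> j" for j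
    unfolding m_def using poly_QH_le_ex_density_rounding[OF H \<open>verts H \<noteq> {}\<close> y that] .
  then have "\<exists>N. \<forall>j\<ge>N. poly_QH Q H y \<le> ex_density Q (m j) * (?S + 2 * real ?n / real j) ^ ?s"
    by blast
  ultimately show ?thesis
    by (rule LIMSEQ_le_const)
qed

lemma poly_QH_le_on_unit_sphere:
  assumes "1 \<le> card (verts Q)" "H \<in> P" "1 \<le> p" and x: "pnorm p (verts H) x = 1"
  shows "poly_QH Q H x \<le> ex_density_Sup Q *
    real (card (verts H)) powr (real (card (verts Q)) - real (card (verts Q)) / p)"
proof -
  let ?s = "card (verts Q)" and ?n = "real (card (verts H))" and ?S = "\<Sum>i\<in>verts H. \<bar>x i\<bar>"
  have fin: "finite (verts H)"
    using finite_verts[OF assms(2)] .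
  have powr_sum: "(\<Sum>i\<in>verts H. \<bar>x i\<bar> powr p) = 1"
    using sum_abs_powr_eq_1[OF x assms(3)] .
  then have "verts H \<noteq> {}"
    by auto
  then have n_pos: "0 < ?n"
    using fin by (simp add: card_gt_0_iff)
  have "?S \<noteq> 0"
  proof
    assume "?S = 0"
    then have "\<forall>i\<in>verts H. \<bar>x i\<bar> = 0"
      using fin by (simp add: sum_nonneg_eq_0_iff)
    then show False
      using powr_sum by simp
  qed
  then have S_pos: "0 < ?S"
    by (simp add: less_le sum_nonneg)
  have "poly_QH Q H x \<le> poly_QH Q H (\<lambda>i. \<bar>x i\<bar>)"
    by (rule poly_QH_le_abs)
  also have "\<dots> \<le> ex_density_Sup Q * ?S ^ ?s"
    using S_pos by (intro poly_QH_le_ex_density_Sup assms(1,2)) simp_all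
  also have "\<dots> \<le> ex_density_Sup Q * (?n powr (1 - 1 / p)) ^ ?s"
    using sum_le_card_powr[OF fin _ assms(3) powr_sum] S_pos
    by (intro mult_left_mono power_mono ex_density_Sup_nonneg) simp_all
  also have "(?n powr (1 - 1 / p)) ^ ?s = ?n powr (real ?s - real ?s / p)"
    using n_pos by (simp add: powr_power algebra_simps)
  finally show ?thesis .
qed

lemma lagr_le:
  assumes "1 \<le> card (verts Q)" "H \<in> P" "verts H \<noteq> {}" "1 \<le> p"
  shows "lagr p Q H \<le> ex_density_Sup Q *
    real (card (verts H)) powr (real (card (verts Q)) - real (card (verts Q)) / p)"
proof -
  have "pnorm p (verts H) (\<lambda>i. real (card (verts H)) powr (- 1 / p)) = 1"
    using finite_verts[OF assms(2)] assms(3,4) by (intro pnorm_uniform) simp_all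
  then show ?thesis
    unfolding lagr_def using poly_QH_le_on_unit_sphere[OF assms(1,2,4)] by (intro cSup_least) auto
qed

lemma lagr_ge:
  assumes "1 \<le> card (verts Q)" "H \<in> P" "verts H \<noteq> {}" "1 \<le> p"
  shows "fact (card (verts Q)) * real (card (verts H)) powr (- real (card (verts Q)) / p)
    * real (card (copies Q H)) \<le> lagr p Q H"
proof -
  let ?s = "card (verts Q)" and ?n = "real (card (verts H))"
  let ?u = "\<lambda>i. ?n powr (- 1 / p)"
  have n_pos: "0 < ?n"
    using assms(3) finite_verts[OF assms(2)] by (simp add: card_gt_0_iff)
  have "pnorm p (verts H) ?u = 1"
    using finite_verts[OF assms(2)] assms(3,4) by (intro pnorm_uniform) simp_all
  then have "poly_QH Q H ?u \<le> lagr p Q H"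
    unfolding lagr_def using poly_QH_le_on_unit_sphere[OF assms(1,2,4)]
    by (intro cSup_upper bdd_aboveI[where M = "ex_density_Sup Q * ?n powr (real ?s - real ?s / p)"]) auto
  moreover have "(?n powr (- 1 / p)) ^ ?s = ?n powr (- real ?s / p)"
    using n_pos by (simp add: powr_power)
  ultimately show ?thesis
    using poly_QH_const_ge_card_copies[OF finite_verts[OF assms(2)], of "?n powr (- 1 / p)" Q] by simp
qed

lemma lagr_le_members_n:
  assumes "1 \<le> card (verts Q)" "1 \<le> p" "1 \<le> n" "H \<in> members_n P n"
  shows "lagr p Q H \<le> ex_density_Sup Q *
    real n powr (real (card (verts Q)) - real (card (verts Q)) / p)"
proof -
  have H: "H \<in> P" "card (verts H) = n"
    using assms(4) by (simp_all add: members_n_def)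
  then have "verts H \<noteq> {}"
    using assms(3) by auto
  then show ?thesis
    using lagr_le[OF assms(1) H(1) _ assms(2)] H(2) by simp
qed

lemma lagr_seq_le_ex_density_Sup:
  assumes "1 \<le> card (verts Q)" "1 \<le> p" "1 \<le> n"
  shows "lagr_seq p Q P n \<le> ex_density_Sup Q"
proof -
  let ?s = "real (card (verts Q))"
  have "lagr_n p Q P n \<le> ex_density_Sup Q * real n powr (?s - ?s / p)"
    unfolding lagr_n_def using members_n_nonempty lagr_le_members_n[OF assms] by (intro cSup_least) auto
  then have "lagr_seq p Q P n \<le> ex_density_Sup Q * real n powr (?s - ?s / p) * real n powr (?s / p - ?s)"
    unfolding lagr_seq_def by (rule mult_right_mono) simp
  also have "\<dots> = ex_density_Sup Q"
    using assms(3) by (simp add: mult.assoc flip: powr_add)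
  finally show ?thesis .
qed

lemma ex_density_le_lagr_seq:
  assumes "1 \<le> card (verts Q)" "1 \<le> p" "1 \<le> n"
  shows "ex_density Q n \<le> lagr_seq p Q P n"
proof -
  let ?s = "card (verts Q)"
  obtain H where H: "H \<in> P" "card (verts H) = n" "card (copies Q H) = ex_num Q P n"
    using ex_num_attained by blast
  have "verts H \<noteq> {}"
    using H(2) assms(3) by auto
  have bdd: "bdd_above (lagr p Q ` members_n P n)"
    using lagr_le_members_n[OF assms] by (intro bdd_aboveI) auto
  have "fact ?s * real n powr (- real ?s / p) * real (ex_num Q P n) \<le> lagr p Q H"
    using lagr_ge[OF assms(1) H(1) \<open>verts H \<noteq> {}\<close> assms(2)] H(2,3) by simp
  also have "\<dots> \<le> lagr_n p Q P n"
    unfolding lagr_n_def using H(1,2) by (intro cSup_upper bdd) (simp add: members_n_def)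
  finally have lower: "fact ?s * real n powr (- real ?s / p) * real (ex_num Q P n)
      * real n powr (real ?s / p - real ?s) \<le> lagr_seq p Q P n"
    unfolding lagr_seq_def by (rule mult_right_mono) simp
  have "real n powr (- real ?s / p) * real n powr (real ?s / p - real ?s) = real n powr (- real ?s)"
    by (simp flip: powr_add)
  also have "\<dots> = 1 / real n ^ ?s"
    using assms(3) by (simp add: powr_minus_divide powr_realpow)
  finally have "fact ?s * real n powr (- real ?s / p) * real (ex_num Q P n)
      * real n powr (real ?s / p - real ?s) = ex_density Q n"
    by (simp add: ex_density_def mult.assoc mult.left_commute[of "real n powr _"])
  then show ?thesis
    using lower by simp
qed

lemma lagr_seq_tendsto:
  assumes "1 \<le> card (verts Q)" "1 \<le> p"
  shows "lagr_seq p Q P \<longlonglongrightarrow> ex_density_Sup Q"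
proof (rule tendsto_sandwich[OF _ _ ex_density_tendsto_Sup[OF assms(1)] tendsto_const])
  show "\<forall>\<^sub>F n in sequentially. ex_density Q n \<le> lagr_seq p Q P n"
    using eventually_ge_at_top[of 1] by eventually_elim (rule ex_density_le_lagr_seq[OF assms])
  show "\<forall>\<^sub>F n in sequentially. lagr_seq p Q P n \<le> ex_density_Sup Q"
    using eventually_ge_at_top[of 1] by eventually_elim (rule lagr_seq_le_ex_density_Sup[OF assms])
qed

end

theorem lemma3p11:
  fixes r s :: nat and Q :: hg and P :: "hg set" and p :: real
  assumes "2 \<le> r" and "r \<le> s"
    and "is_rgraph r Q" and "card (verts Q) = s"
    and "P \<noteq> {}"
    and "hereditary r P" and "isolated_closed P" and "multiplicative P"
    and "1 \<le> p"
  shows "convergent (pi_seq Q P) \<and> convergent (lagr_seq p Q P)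
         \<and> lagr_prop p Q P = pi_prop Q P"
proof -
  interpret hereditary_multiplicative r P
    using assms by unfold_locales simp_all
  have "1 \<le> card (verts Q)"
    using assms(1,2,4) by simp
  then have "pi_seq Q P \<longlonglongrightarrow> ex_density_Sup Q" and "lagr_seq p Q P \<longlonglongrightarrow> ex_density_Sup Q"
    using pi_seq_tendsto lagr_seq_tendsto assms(9) by blast+
  then show ?thesis
    by (auto simp: convergent_def pi_prop_def lagr_prop_def limI)
qed

end
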